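(* For every $n\ge1$ and every optimal $n$-town $S$, $\max\{w(S),h(S)\}\le 2\sqrt{n}+5$.
   Context: An $n$-town is a set $S\subset\mathbb{Z}\times\mathbb{Z}$ of exactly $n$ distinct grid points; its cost is $c(S)=\frac12\sum_{s\in S}\sum_{t\in S}\|s-t\|_1$ (Manhattan distance), and it is optimal if its cost is minimum among all $n$-towns. For $i\in\mathbb{Z}$, the $i$-th column of $S$ is $C_i=\{(i,y)\in S\}$ and the $i$-th row is $R_i=\{(x,i)\in S\}$. The width of $S$ is $w(S)=\max_{i}|R_i|$ and the height is $h(S)=\max_{i}|C_i|$. *)

theory Defs
  imports Complex_Main
begin

type_synonym point = "int \<times> int"

definition manhattan :: "point \<Rightarrow> point \<Rightarrow> int" where
  "manhattan s t = \<bar>fst s - fst t\<bar> + \<bar>snd s - snd t\<bar>"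

definition is_town :: "nat \<Rightarrow> point set \<Rightarrow> bool" where
  "is_town n S \<longleftrightarrow> finite S \<and> card S = n"

definition town_cost :: "point set \<Rightarrow> real" where
  "town_cost S = (1/2) * real_of_int (\<Sum>s\<in>S. \<Sum>t\<in>S. manhattan s t)"

definition optimal_town :: "nat \<Rightarrow> point set \<Rightarrow> bool" where
  "optimal_town n S \<longleftrightarrow> is_town n S \<and> (\<forall>T. is_town n T \<longrightarrow> town_cost S \<le> town_cost T)"

definition col :: "point set \<Rightarrow> int \<Rightarrow> point set" where
  "col S i = {p \<in> S. fst p = i}"

definition row :: "point set \<Rightarrow> int \<Rightarrow> point set" where
  "row S i = {p \<in> S. snd p = i}"

definition width :: "point set \<Rightarrow> nat" where
  "width S = Max (range (\<lambda>i. card (row S i)))"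

definition height :: "point set \<Rightarrow> nat" where
  "height S = Max (range (\<lambda>i. card (col S i)))"

end

theory Submission
  imports Defs
begin

(* Write g = xdist S and h = ydist S. Replacing a point p of an optimal town S by a point q
   outside S cannot lower the cost, so f p + |p - q| \<le> f q, where f q = g (fst q) + h (snd q)
   is the total distance from q to S. Let x0 and y0 minimise g and h. This exchange inequality
   shows that every column of S meets the row y0 and that every row of S is made of segments
   reaching towards x0; so row y0 is the full interval [xmin, xmax] of x-coordinates and the
   width is at most W = xmax - xmin + 1.
   The concave function depth x = g xmin + g xmax - 2 g x is at least W - n at both ends and
   about n W / 2 at x0, while the exchange inequality puts (x, y0 + k) into S as soon as
   depth x > 2 (h (y0 + k) - h y0). As h has second differences at most 2 W k^2, counting these
   points for |k| \<le> K with 2 K + 1 close to sqrt n against |S| = n gives a polynomial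
   inequality in W and sqrt n which fails once W > 2 sqrt n + 5. The height of S is the width
   of its transpose. *)

definition xdist :: "point set \<Rightarrow> int \<Rightarrow> int" where
  "xdist S x = (\<Sum>t\<in>S. \<bar>x - fst t\<bar>)"

definition ydist :: "point set \<Rightarrow> int \<Rightarrow> int" where
  "ydist S y = (\<Sum>t\<in>S. \<bar>y - snd t\<bar>)"

lemma sum_manhattan_eq_xdist_ydist:
  "(\<Sum>t\<in>S. manhattan q t) = xdist S (fst q) + ydist S (snd q)"
  unfolding manhattan_def xdist_def ydist_def by (simp add: sum.distrib)

lemma xdist_nonneg: "0 \<le> xdist S x"
  unfolding xdist_def by (intro sum_nonneg) auto

lemma ydist_nonneg: "0 \<le> ydist S y"
  unfolding ydist_def by (intro sum_nonneg) auto

lemma nonneg_int_fun_has_min: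
  fixes f :: "'a \<Rightarrow> int"
  assumes "\<And>x. 0 \<le> f x"
  obtains x0 where "\<And>x. f x0 \<le> f x"
proof -
  obtain x0 where "\<forall>x. nat (f x0) \<le> nat (f x)"
    using ex_has_least_nat[of "\<lambda>_. True" undefined "\<lambda>x. nat (f x)"] by auto
  with assms show thesis using that by (metis nat_le_eq_zle)
qed

lemma manhattan_sym: "manhattan s t = manhattan t s"
  unfolding manhattan_def by (simp add: abs_minus_commute)

lemma manhattan_self [simp]: "manhattan s s = 0"
  unfolding manhattan_def by simp

lemma sum_manhattan_insert:
  assumes "finite A" "p \<notin> A"
  shows "(\<Sum>s\<in>insert p A. \<Sum>t\<in>insert p A. manhattan s t)
       = 2 * (\<Sum>t\<in>A. manhattan p t) + (\<Sum>s\<in>A. \<Sum>t\<in>A. manhattan s t)"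
proof -
  have "(\<Sum>s\<in>insert p A. \<Sum>t\<in>insert p A. manhattan s t)
      = (\<Sum>t\<in>A. manhattan p t) + (\<Sum>s\<in>A. manhattan s p + (\<Sum>t\<in>A. manhattan s t))"
    using assms by (simp add: sum.insert)
  then show ?thesis
    by (simp add: sum.distrib manhattan_sym)
qed

lemma optimal_town_exchange:
  assumes opt: "optimal_town n S" and "p \<in> S" "q \<notin> S"
  shows "(\<Sum>t\<in>S. manhattan p t) + manhattan p q \<le> (\<Sum>t\<in>S. manhattan q t)"
proof -
  define A where "A = S - {p}"
  have fin: "finite S" and card: "card S = n"
    using opt unfolding optimal_town_def is_town_def by auto
  have finA: "finite A" and "p \<notin> A" "q \<notin> A" and S_eq: "S = insert p A"
    using fin \<open>p \<in> S\<close> \<open>q \<notin> S\<close> unfolding A_def by auto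
  have "card (insert q A) = n"
    using card finA \<open>p \<notin> A\<close> \<open>q \<notin> A\<close> unfolding S_eq by simp
  then have "town_cost S \<le> town_cost (insert q A)"
    using opt finA unfolding optimal_town_def is_town_def by auto
  then have "(\<Sum>s\<in>S. \<Sum>t\<in>S. manhattan s t) \<le> (\<Sum>s\<in>insert q A. \<Sum>t\<in>insert q A. manhattan s t)"
    unfolding town_cost_def by (simp del: of_int_sum)
  then have "(\<Sum>t\<in>A. manhattan p t) \<le> (\<Sum>t\<in>A. manhattan q t)"
    unfolding S_eq sum_manhattan_insert[OF finA \<open>p \<notin> A\<close>]
      sum_manhattan_insert[OF finA \<open>q \<notin> A\<close>] by simp
  then show ?thesis
    unfolding S_eq using finA \<open>p \<notin> A\<close> by (simp add: manhattan_sym)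
qed

lemma abs_chord_le:
  fixes u v w c :: int
  assumes "u \<le> v" "v \<le> w"
  shows "(w - u) * \<bar>v - c\<bar> \<le> (w - v) * \<bar>u - c\<bar> + (v - u) * \<bar>w - c\<bar>"
proof (cases "c \<le> v")
  case True
  have "(w - u) * \<bar>v - c\<bar> = (w - v) * (u - c) + (v - u) * (w - c)"
    using True by (simp add: algebra_simps)
  also have "\<dots> \<le> (w - v) * \<bar>u - c\<bar> + (v - u) * \<bar>w - c\<bar>"
    using assms by (intro add_mono mult_left_mono) auto
  finally show ?thesis .
next
  case False
  have "(w - u) * \<bar>v - c\<bar> = (w - v) * (c - u) + (v - u) * (c - w)"
    using False by (simp add: algebra_simps)
  also have "\<dots> \<le> (w - v) * \<bar>u - c\<bar> + (v - u) * \<bar>w - c\<bar>"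
    using assms by (intro add_mono mult_left_mono) auto
  finally show ?thesis .
qed

lemma xdist_chord_le:
  assumes "u \<le> v" "v \<le> w"
  shows "(w - u) * xdist S v \<le> (w - v) * xdist S u + (v - u) * xdist S w"
proof -
  have "(w - u) * xdist S v = (\<Sum>t\<in>S. (w - u) * \<bar>v - fst t\<bar>)"
    by (simp add: xdist_def sum_distrib_left)
  also have "\<dots> \<le> (\<Sum>t\<in>S. (w - v) * \<bar>u - fst t\<bar> + (v - u) * \<bar>w - fst t\<bar>)"
    by (intro sum_mono abs_chord_le assms)
  also have "\<dots> = (w - v) * xdist S u + (v - u) * xdist S w"
    by (simp add: xdist_def sum_distrib_left sum.distrib)
  finally show ?thesis .
qed

lemma sum_card_filter_swap:
  assumes "finite A"
  shows "(\<Sum>t\<in>A. card {s\<in>A. R s t}) = (\<Sum>s\<in>A. card {t\<in>A. R s t})"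
proof -
  have "(\<Sum>t\<in>A. card {s\<in>A. R s t}) = (\<Sum>t\<in>A. \<Sum>s\<in>A. of_bool (R s t))"
    using assms by (simp add: Int_def conj_commute)
  also have "\<dots> = (\<Sum>s\<in>A. \<Sum>t\<in>A. of_bool (R s t))"
    by (rule sum.swap)
  also have "\<dots> = (\<Sum>s\<in>A. card {t\<in>A. R s t})"
    using assms by (simp add: Int_def conj_commute)
  finally show ?thesis .
qed

text \<open>If every row of \<open>A\<close> is a segment \<open>{c+1..r'}\<close> with \<open>r' \<le> r\<close>, the mean offset
  from \<open>c\<close> is at most \<open>(r + 1 - c) / 2\<close>: count the pairs of points in a common row, the
  first left of the second.\<close>
lemma sum_offsets_of_segments_le:
  fixes A :: "point set" and c r :: int
  assumes fin: "finite A"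
    and bounds: "\<And>t. t \<in> A \<Longrightarrow> c < fst t \<and> fst t \<le> r"
    and segment: "\<And>x x' y. (x, y) \<in> A \<Longrightarrow> c < x' \<Longrightarrow> x' \<le> x \<Longrightarrow> (x', y) \<in> A"
  shows "2 * (\<Sum>t\<in>A. fst t - c) \<le> (r + 1 - c) * int (card A)"
proof -
  let ?R = "\<lambda>s t. snd s = snd t \<and> fst s \<le> fst t"
  have inj: "inj (\<lambda>x::int. (x, y))" for y :: int
    by (auto simp: inj_def)
  have left_count: "fst t - c = int (card {s\<in>A. ?R s t})" if "t \<in> A" for t
  proof -
    have "{s\<in>A. ?R s t} = (\<lambda>x. (x, snd t)) ` {c+1..fst t}"
    proof (intro equalityI subsetI)
      fix s assume "s \<in> {s\<in>A. ?R s t}"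
      then show "s \<in> (\<lambda>x. (x, snd t)) ` {c+1..fst t}"
        using bounds[of s] by (intro image_eqI[of _ _ "fst s"]) (auto simp: prod_eq_iff)
    next
      fix s assume "s \<in> (\<lambda>x. (x, snd t)) ` {c+1..fst t}"
      then show "s \<in> {s\<in>A. ?R s t}"
        using segment[of "fst t" "snd t"] that by auto
    qed
    then show ?thesis
      using bounds[OF that] by (simp add: card_image[OF inj_on_subset[OF inj]])
  qed
  have right_count: "int (card {t\<in>A. ?R s t}) \<le> r - fst s + 1" if "s \<in> A" for s
  proof -
    have "{t\<in>A. ?R s t} \<subseteq> (\<lambda>x. (x, snd s)) ` {fst s..r}"
    proof
      fix t assume "t \<in> {t\<in>A. ?R s t}"
      then show "t \<in> (\<lambda>x. (x, snd s)) ` {fst s..r}"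
        using bounds[of t] by (intro image_eqI[of _ _ "fst t"]) (auto simp: prod_eq_iff)
    qed
    then have "card {t\<in>A. ?R s t} \<le> card ((\<lambda>x. (x, snd s)) ` {fst s..r})"
      by (intro card_mono) auto
    also have "\<dots> \<le> card {fst s..r}"
      by (rule card_image_le) simp
    finally show ?thesis
      using bounds[OF that] by (simp add: le_nat_iff)
  qed
  have "(\<Sum>t\<in>A. fst t - c) = (\<Sum>t\<in>A. int (card {s\<in>A. ?R s t}))"
    by (rule sum.cong) (simp_all add: left_count)
  also have "\<dots> = int (\<Sum>t\<in>A. card {s\<in>A. ?R s t})"
    by (rule of_nat_sum[symmetric])
  also have "\<dots> = int (\<Sum>s\<in>A. card {t\<in>A. ?R s t})"
    by (subst sum_card_filter_swap[OF fin]) (rule refl)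
  also have "\<dots> = (\<Sum>s\<in>A. int (card {t\<in>A. ?R s t}))"
    by (rule of_nat_sum)
  also have "\<dots> \<le> (\<Sum>s\<in>A. r - fst s + 1)"
    by (rule sum_mono) (rule right_count)
  finally have "2 * (\<Sum>t\<in>A. fst t - c) \<le> (\<Sum>t\<in>A. fst t - c) + (\<Sum>s\<in>A. r - fst s + 1)"
    by simp
  also have "\<dots> = (r + 1 - c) * int (card A)"
    by (simp add: sum.distrib[symmetric] mult.commute)
  finally show ?thesis .
qed

lemma chord_level_le:
  fixes l d e D P E \<theta> :: real
  assumes "0 < l" "d + e = l" "d * P - e * E \<le> l * D" "l * (\<theta> + E) \<le> d * (P + E)"
  shows "\<theta> \<le> D"
proof -
  have "E * l = E * d + E * e"
    using assms(2) by (simp flip: distrib_left)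
  then have "l * \<theta> \<le> l * D"
    using assms(3,4) by (simp add: algebra_simps)
  then show ?thesis
    using assms(1) by simp
qed

text \<open>A function lying above the two chords joining \<open>(a, -E)\<close>, \<open>(x0, P)\<close> and \<open>(b, -E)\<close>
  is at least \<open>\<theta>\<close> on an interval of length about \<open>(b - a) (P - \<theta>) / (P + E)\<close>.\<close>
lemma card_superlevel_ge:
  fixes D :: "int \<Rightarrow> real" and a x0 b :: int and P E \<theta> :: real
  assumes "a \<le> x0" "x0 \<le> b"
    and left: "\<And>x. a \<le> x \<Longrightarrow> x \<le> x0 \<Longrightarrow>
      of_int (x - a) * P - of_int (x0 - x) * E \<le> of_int (x0 - a) * D x"
    and right: "\<And>x. x0 \<le> x \<Longrightarrow> x \<le> b \<Longrightarrow>
      of_int (b - x) * P - of_int (x - x0) * E \<le> of_int (b - x0) * D x"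
    and peak: "P \<le> D x0" and pos: "0 < P + E" and "0 \<le> \<theta> + E"
  shows "of_int (b - a) * (P - \<theta>) / (P + E) - 1 \<le> real (card {x\<in>{a..b}. \<theta> \<le> D x})"
proof (cases "\<theta> \<le> P")
  case False
  then have "of_int (b - a) * (P - \<theta>) / (P + E) \<le> 0"
    using assms(1,2) pos by (intro divide_nonpos_pos mult_nonneg_nonpos) auto
  then show ?thesis
    by simp
next
  case True
  define r where "r = (\<theta> + E) / (P + E)"
  have r: "0 \<le> r" "r \<le> 1"
    unfolding r_def using pos True \<open>0 \<le> \<theta> + E\<close> by auto
  define cl where "cl = \<lceil>of_int (x0 - a) * r\<rceil>"
  define cr where "cr = \<lceil>of_int (b - x0) * r\<rceil>"
  have "0 \<le> of_int (x0 - a) * r" "0 \<le> of_int (b - x0) * r"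
    using r assms(1,2) by simp_all
  then have cl: "of_int (x0 - a) * r \<le> of_int cl" "of_int cl \<le> of_int (x0 - a) * r + 1" "0 \<le> cl"
    and cr: "of_int (b - x0) * r \<le> of_int cr" "of_int cr \<le> of_int (b - x0) * r + 1" "0 \<le> cr"
    unfolding cl_def cr_def by (simp_all add: of_int_ceiling_le_add_one)
  have scale: "l * (\<theta> + E) = (l * r) * (P + E)" for l
    unfolding r_def using pos by simp
  have "{a + cl..b - cr} \<subseteq> {x\<in>{a..b}. \<theta> \<le> D x}"
  proof
    fix x assume x: "x \<in> {a + cl..b - cr}"
    consider "x = x0" | "x < x0" | "x0 < x"
      by linarith
    then have "\<theta> \<le> D x"
    proof cases
      case 1
      then show ?thesis
        using peak True by simp
    next
      case 2
      have level: "of_int (x0 - a) * (\<theta> + E) \<le> of_int (x - a) * (P + E)"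
        unfolding scale using cl(1) x pos by (intro mult_right_mono) simp_all
      have chord: "of_int (x - a) * P - of_int (x0 - x) * E \<le> of_int (x0 - a) * D x"
        using 2 x cl(3) by (intro left) simp_all
      show ?thesis
        by (rule chord_level_le[OF _ _ chord level]) (use 2 x cl(3) in simp_all)
    next
      case 3
      have level: "of_int (b - x0) * (\<theta> + E) \<le> of_int (b - x) * (P + E)"
        unfolding scale using cr(1) x pos by (intro mult_right_mono) simp_all
      have chord: "of_int (b - x) * P - of_int (x - x0) * E \<le> of_int (b - x0) * D x"
        using 3 x cr(3) by (intro right) simp_all
      show ?thesis
        by (rule chord_level_le[OF _ _ chord level]) (use 3 x cr(3) in simp_all)
    qed
    then show "x \<in> {x\<in>{a..b}. \<theta> \<le> D x}"
      using x cl(3) cr(3) by simp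
  qed
  then have "card {a + cl..b - cr} \<le> card {x\<in>{a..b}. \<theta> \<le> D x}"
    by (rule card_mono[rotated]) (rule finite_subset[of _ "{a..b}"], auto)
  then have "b - cr - (a + cl) + 1 \<le> int (card {x\<in>{a..b}. \<theta> \<le> D x})"
    by (simp add: nat_le_iff)
  then have "real_of_int (b - cr - (a + cl) + 1) \<le> real (card {x\<in>{a..b}. \<theta> \<le> D x})"
    by (metis of_int_le_iff of_int_of_nat_eq)
  moreover have "of_int (b - a) * (P - \<theta>) / (P + E) = of_int (b - a) * (1 - r)"
    unfolding r_def using pos by (simp add: field_simps)
  ultimately show ?thesis
    using cl(2) cr(2) by (simp add: algebra_simps)
qed

lemma cubic_ge_constant_on_0_2:
  fixes \<mu> c0 c1 c2 c3 :: real
  assumes "0 \<le> \<mu>" "\<mu> \<le> 2" "0 \<le> c1 + 2 * c2 + 4 * c3" "c2 \<le> 0" "c3 \<le> 0"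
  shows "c0 \<le> c0 + c1 * \<mu> + c2 * \<mu>^2 + c3 * \<mu>^3"
proof -
  have sq: "\<mu>^2 \<le> 2 * \<mu>"
    using assms(1,2) mult_right_mono[of \<mu> 2 \<mu>] by (simp add: power2_eq_square)
  have "\<mu>^3 \<le> 2 * \<mu>^2"
    using assms(1,2) mult_left_mono[of \<mu> 2 "\<mu>^2"] by (simp add: power3_eq_cube power2_eq_square)
  with sq have "\<mu>^3 \<le> 4 * \<mu>"
    by simp
  then have "c2 * (2 * \<mu>) \<le> c2 * \<mu>^2" "c3 * (4 * \<mu>) \<le> c3 * \<mu>^3"
    using sq assms(4,5) by (simp_all add: mult_left_mono_neg)
  moreover have "0 \<le> (c1 + 2 * c2 + 4 * c3) * \<mu>"
    using assms(1,3) by simp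
  ultimately show ?thesis
    by (simp add: algebra_simps)
qed

text \<open>The polynomial is expanded around the corner \<open>s = 17/5\<close>, \<open>m = s - 2\<close>,
  \<open>W = 2 s + 5\<close> of the region, where every coefficient turns out to be nonnegative.\<close>
lemma counting_polynomial_pos:
  fixes s m W :: real
  assumes "17/5 \<le> s" "2 * s + 5 \<le> W" "s - 2 \<le> m" "m \<le> s"
  shows "(s^2 + m) * (s^2 * (W - 1) - 2 * W) < (W - 1) * (m * s^2 * (W - 3) - W * m * (m^2 - 1) / 3 - 2 * m)"
proof -
  define \<sigma> where "\<sigma> = s - 17/5"
  define \<mu> where "\<mu> = m - s + 2"
  define \<delta> where "\<delta> = W - 2 * s - 5"
  define cub where "cub c0 c1 c2 c3 = c0 + c1 * \<mu> + c2 * \<mu>^2 + c3 * \<mu>^3" for c0 c1 c2 c3 :: real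
  have ranges: "0 \<le> \<sigma>" "0 \<le> \<delta>" "0 \<le> \<mu>" "\<mu> \<le> 2"
    using assms unfolding \<sigma>_def \<mu>_def \<delta>_def by simp_all
  have cub_nonneg: "0 \<le> cub c0 c1 c2 c3"
    and cub_pos: "0 < c0 \<Longrightarrow> 0 < cub c0 c1 c2 c3"
    if "0 \<le> c0" "0 \<le> c1 + 2 * c2 + 4 * c3" "c2 \<le> 0" "c3 \<le> 0" for c0 c1 c2 c3
    using cubic_ge_constant_on_0_2[OF ranges(3,4) that(2-4), of c0] that(1) unfolding cub_def by simp_all
  have "(W - 1) * (m * s^2 * (W - 3) - W * m * (m^2 - 1) / 3 - 2 * m) - (s^2 + m) * (s^2 * (W - 1) - 2 * W)
    = cub (433188/3125) (96064/125) (-22302/125) (-1062/25)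
      + \<delta> * cub (22548/125) (13369/75) (-791/25) (-113/15)
      + \<delta>^2 * cub (1967/125) (149/15) (-7/5) (-1/3)
      + \<sigma> * cub (49224/125) (42938/75) (-4768/25) (-226/15)
      + \<sigma> * \<delta> * cub (20599/75) (1544/15) (-141/5) (-4/3)
      + \<sigma> * \<delta>^2 * cub (1459/75) 4 (-1) 0
      + \<sigma>^2 * cub (20492/75) (1844/15) (-254/5) (-4/3)
      + \<sigma>^2 * \<delta> * cub (394/3) 12 (-4) 0
      + \<sigma>^2 * \<delta>^2 * (34/5)
      + \<sigma>^3 * cub (1196/15) 8 (-4) 0
      + \<sigma>^3 * \<delta> * (74/3) + \<sigma>^3 * \<delta>^2 * (2/3)
      + \<sigma>^4 * (34/3) + \<sigma>^4 * \<delta> * (5/3) + \<sigma>^5 * (2/3)"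
    unfolding cub_def \<sigma>_def \<mu>_def \<delta>_def by algebra
  also have "\<dots> > 0"
    by (intro add_pos_nonneg mult_nonneg_nonneg zero_le_power cub_pos cub_nonneg ranges) simp_all
  finally show ?thesis
    by simp
qed

lemma odd_nat_between:
  fixes s :: real
  assumes "1 \<le> s"
  obtains K :: nat where "s - 2 \<le> 2 * real K + 1" "2 * real K + 1 \<le> s"
proof -
  define K where "K = nat \<lfloor>(s - 1) / 2\<rfloor>"
  have "real K = of_int \<lfloor>(s - 1) / 2\<rfloor>"
    unfolding K_def using assms by simp
  then have "real K \<le> (s - 1) / 2" "(s - 1) / 2 < real K + 1"
    by linarith+
  then show thesis
    by (intro that[of K]) (simp_all add: field_simps)
qed

lemma le_2_sqrt_add_5_if_le_11:
  assumes "n \<le> (11::nat)"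
  shows "real n \<le> 2 * sqrt (real n) + 5"
proof (cases "n \<le> 5")
  case True
  then show ?thesis
    using real_sqrt_ge_zero[of "real n"] by linarith
next
  case False
  with assms have "(real n - 5)^2 \<le> 4 * real n"
    by (auto simp: power2_eq_square numeral_eq_Suc le_Suc_eq)
  then have "real n - 5 \<le> sqrt (4 * real n)"
    by (intro real_le_rsqrt)
  then show ?thesis
    by (simp add: real_sqrt_mult)
qed

locale optimal_town_medians =
  fixes n :: nat and S :: "point set" and x0 y0 :: int
  assumes optimal: "optimal_town n S" and n_pos: "1 \<le> n"
    and x0_min: "\<And>x. xdist S x0 \<le> xdist S x"
    and y0_min: "\<And>y. ydist S y0 \<le> ydist S y"
begin

lemma finite_S: "finite S" and card_S: "card S = n"
  using optimal unfolding optimal_town_def is_town_def by auto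

lemma exchange:
  assumes "p \<in> S" "q \<notin> S"
  shows "xdist S (fst p) + ydist S (snd p) + \<bar>fst p - fst q\<bar> + \<bar>snd p - snd q\<bar>
    \<le> xdist S (fst q) + ydist S (snd q)"
  using optimal_town_exchange[OF optimal assms]
  unfolding sum_manhattan_eq_xdist_ydist by (simp add: manhattan_def)

lemma mem_median_row:
  assumes "(x, y) \<in> S"
  shows "(x, y0) \<in> S"
proof (rule ccontr)
  assume "(x, y0) \<notin> S"
  from exchange[OF assms this] have "ydist S y + \<bar>y - y0\<bar> \<le> ydist S y0"
    by simp
  with y0_min[of y] have "y = y0"
    by simp
  with assms \<open>(x, y0) \<notin> S\<close> show False
    by simp
qed

lemma xdist_mono_away_from_x0:
  assumes "x0 \<le> v \<and> v \<le> w \<or> w \<le> v \<and> v \<le> x0"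
  shows "xdist S v \<le> xdist S w"
  using assms
proof
  assume *: "x0 \<le> v \<and> v \<le> w"
  have "(w - x0) * xdist S v \<le> (w - v) * xdist S x0 + (v - x0) * xdist S w"
    using * by (intro xdist_chord_le) auto
  also have "\<dots> \<le> (w - v) * xdist S w + (v - x0) * xdist S w"
    using * x0_min[of w] by (intro add_right_mono mult_left_mono) auto
  also have "\<dots> = (w - x0) * xdist S w"
    by (simp add: algebra_simps)
  finally show ?thesis
    using * by (cases "w = x0") auto
next
  assume *: "w \<le> v \<and> v \<le> x0"
  have "(x0 - w) * xdist S v \<le> (x0 - v) * xdist S w + (v - w) * xdist S x0"
    using * by (intro xdist_chord_le) auto
  also have "\<dots> \<le> (x0 - v) * xdist S w + (v - w) * xdist S w"
    using * x0_min[of w] by (intro add_left_mono mult_left_mono) auto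
  also have "\<dots> = (x0 - w) * xdist S w"
    by (simp add: algebra_simps)
  finally show ?thesis
    using * by (cases "w = x0") auto
qed

lemma mem_towards_x0:
  assumes "(x, y) \<in> S" and "x0 \<le> x' \<and> x' \<le> x \<or> x \<le> x' \<and> x' \<le> x0"
  shows "(x', y) \<in> S"
proof (rule ccontr)
  assume "(x', y) \<notin> S"
  from exchange[OF assms(1) this] have "xdist S x + \<bar>x - x'\<bar> \<le> xdist S x'"
    by simp
  moreover have "xdist S x' \<le> xdist S x"
    using assms(2) by (intro xdist_mono_away_from_x0) auto
  ultimately have "x = x'"
    by simp
  with assms(1) \<open>(x', y) \<notin> S\<close> show False
    by simp
qed

definition xmin :: int where "xmin = Min (fst ` S)"
definition xmax :: int where "xmax = Max (fst ` S)"

lemma xmin_le: "t \<in> S \<Longrightarrow> xmin \<le> fst t" and le_xmax: "t \<in> S \<Longrightarrow> fst t \<le> xmax"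
  unfolding xmin_def xmax_def using finite_S by auto

lemma xmin_xmax_mem: "(xmin, y0) \<in> S" "(xmax, y0) \<in> S"
proof -
  have "fst ` S \<noteq> {}"
    using card_S n_pos by auto
  then have "xmin \<in> fst ` S" "xmax \<in> fst ` S"
    unfolding xmin_def xmax_def using finite_S by auto
  then show "(xmin, y0) \<in> S" "(xmax, y0) \<in> S"
    using mem_median_row by auto
qed

lemma xmin_le_xmax: "xmin \<le> xmax"
  using le_xmax[OF xmin_xmax_mem(1)] by simp

lemma x0_between: "xmin \<le> x0" "x0 \<le> xmax"
proof -
  show "xmin \<le> x0"
    using mem_towards_x0[OF xmin_xmax_mem(1), of x0] xmin_le[of "(x0, y0)"] by fastforce
  show "x0 \<le> xmax"
    using mem_towards_x0[OF xmin_xmax_mem(2), of x0] le_xmax[of "(x0, y0)"] by fastforce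
qed

lemma median_row_full:
  assumes "xmin \<le> x" "x \<le> xmax"
  shows "(x, y0) \<in> S"
  using assms mem_towards_x0[OF xmin_xmax_mem(1), of x] mem_towards_x0[OF xmin_xmax_mem(2), of x]
  by (cases "x \<le> x0") auto

lemma span_le_n: "xmax - xmin + 1 \<le> int n"
proof -
  have "{xmin..xmax} \<times> {y0} \<subseteq> S"
    using median_row_full by auto
  then have "card ({xmin..xmax} \<times> {y0}) \<le> n"
    using finite_S card_S card_mono by metis
  then show ?thesis
    using xmin_le_xmax by (simp add: card_cartesian_product)
qed

lemma width_le_span: "int (width S) \<le> xmax - xmin + 1"
proof -
  have "card (row S i) \<le> nat (xmax - xmin + 1)" for i
  proof -
    have "row S i \<subseteq> {xmin..xmax} \<times> {i}"
      unfolding row_def using xmin_le le_xmax by force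
    then have "card (row S i) \<le> card ({xmin..xmax} \<times> {i})"
      by (intro card_mono) auto
    then show ?thesis
      by (simp add: card_cartesian_product)
  qed
  then have "width S \<le> nat (xmax - xmin + 1)"
    unfolding width_def by (subst Max_le_iff) (auto intro: finite_subset[of _ "{..nat (xmax - xmin + 1)}"])
  then show ?thesis
    using xmin_le_xmax by simp
qed

lemma xdist_xmin_add_xmax: "xdist S xmin + xdist S xmax = int n * (xmax - xmin)"
proof -
  have "xdist S xmin + xdist S xmax = (\<Sum>t\<in>S. xmax - xmin)"
    unfolding xdist_def sum.distrib[symmetric]
    by (intro sum.cong refl) (use xmin_le le_xmax in force)
  then show ?thesis
    using card_S by simp
qed

lemma xdist_beyond_ends:
  "xdist S (xmin - 1) = xdist S xmin + int n" "xdist S (xmax + 1) = xdist S xmax + int n"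
proof -
  have "xdist S (xmin - 1) = (\<Sum>t\<in>S. \<bar>xmin - fst t\<bar> + 1)"
    unfolding xdist_def by (intro sum.cong refl) (use xmin_le in force)
  then show "xdist S (xmin - 1) = xdist S xmin + int n"
    using card_S by (simp add: sum.distrib xdist_def)
  have "xdist S (xmax + 1) = (\<Sum>t\<in>S. \<bar>xmax - fst t\<bar> + 1)"
    unfolding xdist_def by (intro sum.cong refl) (use le_xmax in force)
  then show "xdist S (xmax + 1) = xdist S xmax + int n"
    using card_S by (simp add: sum.distrib xdist_def)
qed

text \<open>Equivalently \<open>depth x = xdist S xmin + xdist S xmax - 2 * xdist S x\<close>: a concave function of \<open>x\<close>.\<close>
definition depth :: "int \<Rightarrow> int" where
  "depth x = int n * (xmax - xmin) - 2 * xdist S x"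

lemma depth_chord_le:
  assumes "u \<le> v" "v \<le> w"
  shows "(w - v) * depth u + (v - u) * depth w \<le> (w - u) * depth v"
proof -
  have "(w - u) * depth v - ((w - v) * depth u + (v - u) * depth w)
      = 2 * ((w - v) * xdist S u + (v - u) * xdist S w - (w - u) * xdist S v)"
    unfolding depth_def by (simp add: algebra_simps)
  then show ?thesis
    using xdist_chord_le[OF assms, of S] by simp
qed

lemma depth_at_ends_ge:
  "xmax - xmin + 1 - int n \<le> depth xmin" "xmax - xmin + 1 - int n \<le> depth xmax"
proof -
  have "(xmax + 1, y0) \<notin> S" "(xmin - 1, y0) \<notin> S"
    using le_xmax xmin_le by force+
  from exchange[OF xmin_xmax_mem(1) this(1)] exchange[OF xmin_xmax_mem(2) this(2)]
  show "xmax - xmin + 1 - int n \<le> depth xmin" "xmax - xmin + 1 - int n \<le> depth xmax"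
    using xmin_le_xmax xdist_beyond_ends xdist_xmin_add_xmax unfolding depth_def by simp_all
qed

text \<open>Exchanging \<open>(x, y)\<close> with each end of the median row and adding the two inequalities.\<close>
lemma mem_if_depth:
  assumes "xmin \<le> x" "x \<le> xmax"
    and "2 * (ydist S y - ydist S y0) - 2 * \<bar>y - y0\<bar> < depth x + (xmax - xmin)"
  shows "(x, y) \<in> S"
proof (rule ccontr)
  assume "(x, y) \<notin> S"
  from exchange[OF xmin_xmax_mem(1) this] exchange[OF xmin_xmax_mem(2) this]
  have "xdist S xmin + ydist S y0 + (x - xmin) + \<bar>y - y0\<bar> \<le> xdist S x + ydist S y"
    "xdist S xmax + ydist S y0 + (xmax - x) + \<bar>y - y0\<bar> \<le> xdist S x + ydist S y"
    using assms(1,2) by (simp_all add: abs_minus_commute)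
  then show False
    using assms(3) xdist_xmin_add_xmax unfolding depth_def by (smt (verit))
qed

lemma card_sides_of_x0_le:
  "2 * card {t\<in>S. fst t < x0} \<le> n" "2 * card {t\<in>S. x0 < fst t} \<le> n"
proof -
  have card_filter: "int (card {t\<in>S. P t}) = (\<Sum>t\<in>S. of_bool (P t))" for P
    using finite_S by (simp add: Int_def conj_commute)
  have "xdist S (x0 - 1) = (\<Sum>t\<in>S. \<bar>x0 - fst t\<bar> + (1 - 2 * of_bool (fst t < x0)))"
    unfolding xdist_def by (intro sum.cong refl) auto
  also have "\<dots> = xdist S x0 + int n - 2 * int (card {t\<in>S. fst t < x0})"
    unfolding xdist_def card_filter using card_S
    by (simp add: sum.distrib sum_subtractf sum_distrib_left)
  finally show "2 * card {t\<in>S. fst t < x0} \<le> n"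
    using x0_min[of "x0 - 1"] by simp
  have "xdist S (x0 + 1) = (\<Sum>t\<in>S. \<bar>x0 - fst t\<bar> + (1 - 2 * of_bool (x0 < fst t)))"
    unfolding xdist_def by (intro sum.cong refl) auto
  also have "\<dots> = xdist S x0 + int n - 2 * int (card {t\<in>S. x0 < fst t})"
    unfolding xdist_def card_filter using card_S
    by (simp add: sum.distrib sum_subtractf sum_distrib_left)
  finally show "2 * card {t\<in>S. x0 < fst t} \<le> n"
    using x0_min[of "x0 + 1"] by simp
qed

lemma xdist_x0_le: "4 * xdist S x0 \<le> int n * (xmax - xmin + 2)"
proof -
  define R where "R = {t\<in>S. x0 < fst t}"
  define L where "L = {t\<in>S. fst t < x0}"
  define mirror :: "point \<Rightarrow> point" where "mirror t = (- fst t, snd t)" for t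
  have inj_mirror: "inj_on mirror L"
    unfolding mirror_def inj_on_def by auto
  have split: "xdist S x0 = (\<Sum>t\<in>L. x0 - fst t) + (\<Sum>t\<in>R. fst t - x0)"
  proof -
    have "xdist S x0 = (\<Sum>t\<in>S. (if fst t < x0 then x0 - fst t else 0)
                               + (if x0 < fst t then fst t - x0 else 0))"
      unfolding xdist_def by (intro sum.cong refl) auto
    then show ?thesis
      unfolding L_def R_def using finite_S by (simp add: sum.distrib sum.inter_filter)
  qed
  have "2 * (\<Sum>t\<in>R. fst t - x0) \<le> (xmax + 1 - x0) * int (card R)"
    using finite_S le_xmax mem_towards_x0 unfolding R_def
    by (intro sum_offsets_of_segments_le) auto
  moreover have "2 * (\<Sum>t\<in>mirror ` L. fst t - (- x0)) \<le> (- xmin + 1 - (- x0)) * int (card (mirror ` L))"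
  proof (rule sum_offsets_of_segments_le)
    fix x x' y assume "(x, y) \<in> mirror ` L" "- x0 < x'" "x' \<le> x"
    then show "(x', y) \<in> mirror ` L"
      using mem_towards_x0[of "- x" y "- x'"]
      by (auto simp: mirror_def L_def image_iff intro!: bexI[of _ "(- x', y)"])
  qed (use finite_S xmin_le in \<open>auto simp: mirror_def L_def\<close>)
  then have "2 * (\<Sum>t\<in>L. x0 - fst t) \<le> (x0 - xmin + 1) * int (card L)"
    unfolding sum.reindex[OF inj_mirror] card_image[OF inj_mirror] by (simp add: mirror_def algebra_simps)
  moreover have "2 * card L \<le> n" "2 * card R \<le> n"
    unfolding L_def R_def by (fact card_sides_of_x0_le)+
  then have "(x0 - xmin + 1) * (2 * int (card L)) + (xmax + 1 - x0) * (2 * int (card R))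
      \<le> (x0 - xmin + 1) * int n + (xmax + 1 - x0) * int n"
    using x0_between by (intro add_mono mult_left_mono) auto
  ultimately show ?thesis
    unfolding split by (simp add: algebra_simps)
qed

lemma depth_x0_ge: "int n * (xmax - xmin - 2) \<le> 2 * depth x0"
  using xdist_x0_le unfolding depth_def by (simp add: algebra_simps)

lemma card_band_le:
  "card {t\<in>S. \<bar>snd t - c\<bar> \<le> int k} \<le> (2 * k + 1) * nat (xmax - xmin + 1)"
proof -
  have "{t\<in>S. \<bar>snd t - c\<bar> \<le> int k} \<subseteq> {xmin..xmax} \<times> {c - int k..c + int k}"
    using xmin_le le_xmax by force
  then have "card {t\<in>S. \<bar>snd t - c\<bar> \<le> int k} \<le> card ({xmin..xmax} \<times> {c - int k..c + int k})"
    by (intro card_mono) auto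
  then show ?thesis
    by (simp add: card_cartesian_product nat_add_distrib nat_mult_distrib mult.commute)
qed

lemma sum_tent_le: "(\<Sum>t\<in>S. max 0 (int k - \<bar>snd t - c\<bar>)) \<le> (xmax - xmin + 1) * int k ^ 2"
proof (induction k)
  case 0
  have "(\<Sum>t\<in>S. max 0 (int 0 - \<bar>snd t - c\<bar>)) = 0"
    by (intro sum.neutral) simp
  then show ?case
    by simp
next
  case (Suc k)
  have "(\<Sum>t\<in>S. max 0 (int (Suc k) - \<bar>snd t - c\<bar>))
      = (\<Sum>t\<in>S. max 0 (int k - \<bar>snd t - c\<bar>) + of_bool (\<bar>snd t - c\<bar> \<le> int k))"
    by (intro sum.cong refl) (auto simp: max_def)
  also have "\<dots> = (\<Sum>t\<in>S. max 0 (int k - \<bar>snd t - c\<bar>)) + int (card {t\<in>S. \<bar>snd t - c\<bar> \<le> int k})"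
    using finite_S by (simp add: sum.distrib Int_def)
  also have "\<dots> \<le> (xmax - xmin + 1) * int k ^ 2 + int ((2 * k + 1) * nat (xmax - xmin + 1))"
    using Suc card_band_le[of c k] by (intro add_mono) (simp_all only: of_nat_le_iff)
  also have "\<dots> = (xmax - xmin + 1) * int (Suc k) ^ 2"
    using xmin_le_xmax by (simp add: algebra_simps power2_eq_square)
  finally show ?case .
qed

lemma ydist_second_difference_le:
  "ydist S (c + int k) + ydist S (c - int k) - 2 * ydist S c \<le> 2 * (xmax - xmin + 1) * int k ^ 2"
proof -
  have "ydist S (c + int k) + ydist S (c - int k) - 2 * ydist S c
     = (\<Sum>t\<in>S. \<bar>c + int k - snd t\<bar> + \<bar>c - int k - snd t\<bar> - 2 * \<bar>c - snd t\<bar>)"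
    by (simp add: ydist_def sum.distrib sum_subtractf sum_distrib_left)
  also have "\<dots> = 2 * (\<Sum>t\<in>S. max 0 (int k - \<bar>snd t - c\<bar>))"
    unfolding sum_distrib_left by (intro sum.cong refl) (auto simp: abs_if max_def)
  also have "\<dots> \<le> 2 * (xmax - xmin + 1) * int k ^ 2"
    using sum_tent_le[of k c] by (simp only: mult.assoc mult_le_cancel_left_pos)
  finally show ?thesis .
qed

text \<open>\<open>mid_depth \<le> depth x0\<close>, and \<open>- end_deficit\<close> bounds the depth at both ends.\<close>
definition mid_depth :: real where
  "mid_depth = real n * (of_int (xmax - xmin) - 2) / 2"

definition end_deficit :: real where
  "end_deficit = real n - of_int (xmax - xmin + 1)"

lemma card_depth_superlevel_ge:
  assumes pos: "0 < mid_depth + end_deficit" and "0 \<le> \<theta>"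
  shows "of_int (xmax - xmin) * (mid_depth - \<theta>) / (mid_depth + end_deficit) - 1
    \<le> real (card {x\<in>{xmin..xmax}. \<theta> \<le> of_int (depth x)})"
proof (rule card_superlevel_ge[OF x0_between _ _ _ pos])
  have "real_of_int (int n * (xmax - xmin - 2)) \<le> of_int (2 * depth x0)"
    using depth_x0_ge by (simp only: of_int_le_iff)
  then have mid: "mid_depth \<le> of_int (depth x0)"
    unfolding mid_depth_def by simp
  then show "mid_depth \<le> of_int (depth x0)" .
  have ends: "- end_deficit \<le> of_int (depth xmin)" "- end_deficit \<le> of_int (depth xmax)"
    using depth_at_ends_ge unfolding end_deficit_def by simp_all
  show "of_int (x - xmin) * mid_depth - of_int (x0 - x) * end_deficit
      \<le> of_int (x0 - xmin) * of_int (depth x)" if "xmin \<le> x" "x \<le> x0" for x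
  proof -
    have "of_int (x - xmin) * mid_depth \<le> of_int (x - xmin) * of_int (depth x0)"
      "of_int (x0 - x) * (- end_deficit) \<le> of_int (x0 - x) * of_int (depth xmin)"
      using that mid ends by (intro mult_left_mono; simp)+
    moreover have "real_of_int ((x0 - x) * depth xmin + (x - xmin) * depth x0)
        \<le> of_int ((x0 - xmin) * depth x)"
      using depth_chord_le[OF that] by (simp only: of_int_le_iff)
    ultimately show ?thesis
      unfolding of_int_add of_int_mult by linarith
  qed
  show "of_int (xmax - x) * mid_depth - of_int (x - x0) * end_deficit
      \<le> of_int (xmax - x0) * of_int (depth x)" if "x0 \<le> x" "x \<le> xmax" for x
  proof -
    have "of_int (xmax - x) * mid_depth \<le> of_int (xmax - x) * of_int (depth x0)"
      "of_int (x - x0) * (- end_deficit) \<le> of_int (x - x0) * of_int (depth xmax)"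
      using that mid ends by (intro mult_left_mono; simp)+
    moreover have "real_of_int ((xmax - x) * depth x0 + (x - x0) * depth xmax)
        \<le> of_int ((xmax - x0) * depth x)"
      using depth_chord_le[OF that] by (simp only: of_int_le_iff)
    ultimately show ?thesis
      unfolding of_int_add of_int_mult by linarith
  qed
  show "0 \<le> \<theta> + end_deficit"
    using \<open>0 \<le> \<theta>\<close> span_le_n unfolding end_deficit_def by simp
qed

text \<open>By \<open>mem_if_depth\<close>, \<open>(x, y0 + k) \<in> S\<close> for every \<open>x \<in> level k\<close>.\<close>
definition threshold :: "int \<Rightarrow> int" where
  "threshold k = 2 * (ydist S (y0 + k) - ydist S y0) + 1"

definition level :: "int \<Rightarrow> int set" where
  "level k = {x\<in>{xmin..xmax}. threshold k \<le> depth x}"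

lemma sum_card_level_le:
  assumes "finite I"
  shows "(\<Sum>k\<in>I. card (level k)) \<le> n"
proof -
  let ?f = "\<lambda>(k, x). (x, y0 + k)"
  have "?f ` (SIGMA k:I. level k) \<subseteq> S"
  proof clarify
    fix k x assume "k \<in> I" "x \<in> level k"
    then show "(x, y0 + k) \<in> S"
      using xmin_le_xmax by (intro mem_if_depth) (auto simp: level_def threshold_def)
  qed
  moreover have "inj_on ?f (SIGMA k:I. level k)"
    by (auto simp: inj_on_def)
  ultimately have "card (SIGMA k:I. level k) \<le> n"
    using card_mono[OF finite_S] card_S by (metis card_image)
  moreover have "finite (level k)" for k
    unfolding level_def by (rule finite_subset[of _ "{xmin..xmax}"]) auto
  ultimately show ?thesis
    using assms by simp
qed

lemma sum_ydist_excess_le: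
  "3 * (\<Sum>k\<in>{-int K..int K}. ydist S (y0 + k) - ydist S y0)
    \<le> (xmax - xmin + 1) * (int K * (int K + 1) * (2 * int K + 1))"
proof (induction K)
  case 0
  then show ?case
    by simp
next
  case (Suc K)
  have "{-int (Suc K)..int (Suc K)} = insert (int (Suc K)) (insert (- int (Suc K)) {-int K..int K})"
    by auto
  then have "(\<Sum>k\<in>{-int (Suc K)..int (Suc K)}. ydist S (y0 + k) - ydist S y0)
      = (\<Sum>k\<in>{-int K..int K}. ydist S (y0 + k) - ydist S y0)
        + (ydist S (y0 + int (Suc K)) + ydist S (y0 - int (Suc K)) - 2 * ydist S y0)"
    by (simp add: algebra_simps)
  also have "\<dots> \<le> (\<Sum>k\<in>{-int K..int K}. ydist S (y0 + k) - ydist S y0)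
        + 2 * (xmax - xmin + 1) * int (Suc K) ^ 2"
    using ydist_second_difference_le[of y0 "Suc K"] by simp
  finally show ?case
    using Suc by (simp add: algebra_simps power2_eq_square)
qed

lemma card_level_ge:
  assumes pos: "0 < mid_depth + end_deficit"
  shows "of_int (xmax - xmin) * (mid_depth - of_int (threshold k))
    \<le> (real (card (level k)) + 1) * (mid_depth + end_deficit)"
proof -
  have "{x\<in>{xmin..xmax}. real_of_int (threshold k) \<le> of_int (depth x)} = level k"
    unfolding level_def by (simp only: of_int_le_iff)
  moreover have "0 \<le> real_of_int (threshold k)"
    unfolding threshold_def using y0_min[of "y0 + k"] by simp
  ultimately have "of_int (xmax - xmin) * (mid_depth - of_int (threshold k)) / (mid_depth + end_deficit)
      \<le> real (card (level k)) + 1"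
    using card_depth_superlevel_ge[OF pos] by fastforce
  then show ?thesis
    using pos by (simp add: pos_divide_le_eq)
qed

lemma sum_threshold_le:
  "(\<Sum>k\<in>{-int K..int K}. real_of_int (threshold k))
    \<le> 2 * of_int (xmax - xmin + 1) * (real K * (real K + 1) * (2 * real K + 1)) / 3 + (2 * real K + 1)"
proof -
  have "3 * (\<Sum>k\<in>{-int K..int K}. threshold k)
      = 2 * (3 * (\<Sum>k\<in>{-int K..int K}. ydist S (y0 + k) - ydist S y0)) + 3 * (2 * int K + 1)"
    unfolding threshold_def by (simp add: sum.distrib sum_distrib_left)
  also have "\<dots> \<le> 2 * ((xmax - xmin + 1) * (int K * (int K + 1) * (2 * int K + 1))) + 3 * (2 * int K + 1)"
    using sum_ydist_excess_le[of K] by linarith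
  finally have "real_of_int (3 * (\<Sum>k\<in>{-int K..int K}. threshold k))
      \<le> of_int (2 * ((xmax - xmin + 1) * (int K * (int K + 1) * (2 * int K + 1))) + 3 * (2 * int K + 1))"
    by (simp only: of_int_le_iff)
  then show ?thesis
    by (simp add: field_simps)
qed

lemma counting_inequality:
  fixes K :: nat
  assumes pos: "0 < mid_depth + end_deficit"
  shows "of_int (xmax - xmin) * ((2 * real K + 1) * mid_depth
      - (2 * of_int (xmax - xmin + 1) * (real K * (real K + 1) * (2 * real K + 1)) / 3 + (2 * real K + 1)))
    \<le> (real n + (2 * real K + 1)) * (mid_depth + end_deficit)"
proof -
  define I where "I = {-int K..int K}"
  have card_I: "real (card I) = 2 * real K + 1"
    unfolding I_def by simp
  have "of_int (xmax - xmin) * ((2 * real K + 1) * mid_depth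
      - (2 * of_int (xmax - xmin + 1) * (real K * (real K + 1) * (2 * real K + 1)) / 3 + (2 * real K + 1)))
    \<le> of_int (xmax - xmin) * (real (card I) * mid_depth - (\<Sum>k\<in>I. of_int (threshold k)))"
    using xmin_le_xmax sum_threshold_le[of K] unfolding card_I I_def by (intro mult_left_mono) simp_all
  also have "\<dots> = (\<Sum>k\<in>I. of_int (xmax - xmin) * (mid_depth - of_int (threshold k)))"
    unfolding right_diff_distrib sum_subtractf sum_distrib_left[symmetric] by simp
  also have "\<dots> \<le> (\<Sum>k\<in>I. (real (card (level k)) + 1) * (mid_depth + end_deficit))"
    by (intro sum_mono card_level_ge pos)
  also have "\<dots> = (real (\<Sum>k\<in>I. card (level k)) + real (card I)) * (mid_depth + end_deficit)"
    unfolding sum_distrib_right[symmetric] sum.distrib by simp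
  also have "\<dots> \<le> (real n + real (card I)) * (mid_depth + end_deficit)"
    using sum_card_level_le[of I] pos unfolding I_def by (intro mult_right_mono) (simp_all del: of_nat_sum)
  finally show ?thesis
    unfolding card_I .
qed

lemma span_le: "of_int (xmax - xmin + 1) \<le> 2 * sqrt (real n) + 5"
proof (rule ccontr)
  define W where "W = real_of_int (xmax - xmin + 1)"
  define s where "s = sqrt (real n)"
  assume "\<not> of_int (xmax - xmin + 1) \<le> 2 * sqrt (real n) + 5"
  then have W_gt: "2 * s + 5 < W"
    unfolding W_def s_def by simp
  then have W_big: "2 * s + 5 \<le> W"
    by simp
  have "W \<le> real n"
    unfolding W_def using span_le_n by linarith
  have "\<not> n \<le> 11"
  proof
    assume "n \<le> 11"
    then show False
      using le_2_sqrt_add_5_if_le_11[of n] W_gt \<open>W \<le> real n\<close> unfolding s_def by linarith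
  qed
  then have "12 \<le> n"
    by simp
  have n_eq: "real n = s^2"
    unfolding s_def by simp
  have s_ge: "17/5 \<le> s"
    unfolding s_def using \<open>12 \<le> n\<close> by (intro real_le_rsqrt) (simp add: power2_eq_square)
  obtain K :: nat where K: "s - 2 \<le> 2 * real K + 1" "2 * real K + 1 \<le> s"
    using odd_nat_between[of s] s_ge by auto
  have mid: "mid_depth = s^2 * (W - 3) / 2" and ends: "end_deficit = s^2 - W"
    unfolding mid_depth_def end_deficit_def n_eq W_def by simp_all
  have "12 * (W - 1) \<le> s^2 * (W - 1)"
    using \<open>12 \<le> n\<close> n_eq W_big s_ge by (intro mult_right_mono) auto
  then have pos: "0 < mid_depth + end_deficit"
    unfolding mid ends using W_big s_ge by (simp add: field_simps)
  have "(W - 1) * ((2 * real K + 1) * s^2 * (W - 3) - W * (2 * real K + 1) * ((2 * real K + 1)^2 - 1) / 3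
      - 2 * (2 * real K + 1)) \<le> (s^2 + (2 * real K + 1)) * (s^2 * (W - 1) - 2 * W)"
  proof -
    have "real_of_int (xmax - xmin) = W - 1"
      unfolding W_def by simp
    note counting_inequality[OF pos, of K, unfolded mid ends n_eq this W_def[symmetric]]
    then show ?thesis
      by (simp add: field_simps power2_eq_square)
  qed
  then show False
    using counting_polynomial_pos[OF s_ge W_big K] by simp
qed

end

lemma optimal_town_width_le:
  assumes "optimal_town n S" "1 \<le> n"
  shows "real (width S) \<le> 2 * sqrt (real n) + 5"
proof -
  obtain x0 where "\<And>x. xdist S x0 \<le> xdist S x"
    using nonneg_int_fun_has_min[of "xdist S"] xdist_nonneg by blast
  moreover obtain y0 where "\<And>y. ydist S y0 \<le> ydist S y"
    using nonneg_int_fun_has_min[of "ydist S"] ydist_nonneg by blast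
  ultimately interpret optimal_town_medians n S x0 y0
    using assms by unfold_locales auto
  show ?thesis
    using width_le_span span_le by linarith
qed

lemma town_cost_swap: "town_cost (prod.swap ` T) = town_cost T"
proof -
  have "(\<Sum>s\<in>prod.swap ` T. \<Sum>t\<in>prod.swap ` T. manhattan s t)
      = (\<Sum>s\<in>T. \<Sum>t\<in>T. manhattan s t)"
    by (simp add: sum.reindex manhattan_def add.commute)
  then show ?thesis
    unfolding town_cost_def by simp
qed

lemma is_town_swap: "is_town n (prod.swap ` T) \<longleftrightarrow> is_town n T"
  unfolding is_town_def by (simp add: finite_image_iff card_image)

lemma optimal_town_swap:
  assumes "optimal_town n S"
  shows "optimal_town n (prod.swap ` S)"
  unfolding optimal_town_def
proof (intro conjI allI impI)
  show "is_town n (prod.swap ` S)"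
    using assms is_town_swap unfolding optimal_town_def by blast
  fix T assume "is_town n T"
  then have "town_cost S \<le> town_cost (prod.swap ` T)"
    using assms is_town_swap unfolding optimal_town_def by blast
  then show "town_cost (prod.swap ` S) \<le> town_cost T"
    by (simp add: town_cost_swap)
qed

lemma width_swap: "width (prod.swap ` S) = height S"
proof -
  have "row (prod.swap ` S) i = prod.swap ` col S i" for i
    unfolding row_def col_def by force
  then show ?thesis
    unfolding width_def height_def by (simp add: card_image)
qed

theorem lemma5:
  fixes n :: nat and S :: "point set"
  assumes "n \<ge> 1" and "optimal_town n S"
  shows "real (max (width S) (height S)) \<le> 2 * sqrt (real n) + 5"
  using optimal_town_width_le[OF assms(2,1)] optimal_town_width_le[OF optimal_town_swap[OF assms(2)] assms(1)]
  by (simp add: width_swap)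

end
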